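(* Let $G_H$ be a finite undirected multigraph (parallel edges allowed, no self-loops) with vertex set $V$ and edge set partitioned as $E = S \sqcup S^c$ into secure edges $S$ and insecure edges $S^c$. (1) If $S^c \neq \emptyset$ (even if $|S^c| = 1$), then $G_H$ admits both a hidden generalized attack and a detectable generalized attack. (2) If $G_H$ admits a hidden (respectively detectable) generalized attack and $G'$ is obtained from $G_H$ by adding new secure edges between vertices of $V$, then $G'$ also admits a hidden (respectively detectable) generalized attack.
   Context: For a nonempty proper subset $U \subsetneq V$, the cut $\delta(U)$ is the set of edges with exactly one endpoint in $U$; a cut is any set of this form. A generalized attack is a triple $(C,J,I)$ where $C$ is a cut, $J \subseteq C$ is a set of jammed edges (secure or insecure), and $I \subseteq (C \cap S^c)\setminus J$ is a nonempty set of insecure edges into which data is injected. The attack is hidden if $I \cup J = C$, and detectable if $2|I| > |C\setminus J|$. *)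

theory Defs
  imports Main
begin

text \<open>A finite multigraph: vertex set V, edge set E (edges are abstract names, so
parallel edges are allowed), and ends e = the set of the two distinct endpoints of e
(no self-loops).\<close>
definition multigraph :: "'v set \<Rightarrow> 'e set \<Rightarrow> ('e \<Rightarrow> 'v set) \<Rightarrow> bool" where
  "multigraph V E ends \<longleftrightarrow> finite V \<and> finite E \<and>
     (\<forall>e\<in>E. ends e \<subseteq> V \<and> card (ends e) = 2)"

definition cut_of :: "'e set \<Rightarrow> ('e \<Rightarrow> 'v set) \<Rightarrow> 'v set \<Rightarrow> 'e set" where
  "cut_of E ends U = {e \<in> E. card (ends e \<inter> U) = 1}"

definition is_cut :: "'v set \<Rightarrow> 'e set \<Rightarrow> ('e \<Rightarrow> 'v set) \<Rightarrow> 'e set \<Rightarrow> bool" where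
  "is_cut V E ends C \<longleftrightarrow> (\<exists>U. U \<noteq> {} \<and> U \<subset> V \<and> C = cut_of E ends U)"

definition gen_attack :: "'v set \<Rightarrow> 'e set \<Rightarrow> ('e \<Rightarrow> 'v set) \<Rightarrow> 'e set \<Rightarrow>
    'e set \<Rightarrow> 'e set \<Rightarrow> 'e set \<Rightarrow> bool" where
  "gen_attack V E ends S C J I \<longleftrightarrow> is_cut V E ends C \<and> J \<subseteq> C \<and>
     I \<subseteq> (C \<inter> (E - S)) - J \<and> I \<noteq> {}"

definition hidden_attack where
  "hidden_attack V E ends S C J I \<longleftrightarrow> gen_attack V E ends S C J I \<and> I \<union> J = C"

definition detectable_attack where
  "detectable_attack V E ends S C J I \<longleftrightarrow> gen_attack V E ends S C J I \<and> 2 * card I > card (C - J)"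

definition admits_hidden_attack where
  "admits_hidden_attack V E ends S \<longleftrightarrow> (\<exists>C J I. hidden_attack V E ends S C J I)"

definition admits_detectable_attack where
  "admits_detectable_attack V E ends S \<longleftrightarrow> (\<exists>C J I. detectable_attack V E ends S C J I)"

end

theory Submission
  imports Defs
begin

text \<open>Any insecure edge e alone gives both attacks: cut off one endpoint a of e, jam every
other edge of the cut and inject into e. Adding secure edges to a graph with an attack
(C, J, I) on the cut of U: the cut of U in the larger graph meets the old edges exactly in C,
and jamming its new edges as well keeps the attack hidden and leaves the unjammed part C - J unchanged.\<close>

lemma cut_of_singleton_endpoint:
  assumes "e \<in> E" and "a \<in> ends e"
  shows "e \<in> cut_of E ends {a}"
proof -
  have "ends e \<inter> {a} = {a}" using assms(2) by blast
  then show ?thesis using assms(1) unfolding cut_of_def by simp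
qed

lemma is_cut_singleton_endpoint:
  assumes "multigraph V E ends" and "e \<in> E" and "a \<in> ends e"
  shows "is_cut V E ends (cut_of E ends {a})"
proof -
  have "card (ends e) = 2" and "ends e \<subseteq> V" using assms unfolding multigraph_def by auto
  then obtain b where "b \<in> V" "b \<noteq> a" by (metis card_2_iff insert_subset)
  then have "{a} \<subset> V" using assms(3) \<open>ends e \<subseteq> V\<close> by blast
  then show ?thesis unfolding is_cut_def by blast
qed

lemma gen_attack_single_edge:
  assumes "multigraph V E ends" and "e \<in> E - S" and "a \<in> ends e"
  shows "gen_attack V E ends S (cut_of E ends {a}) (cut_of E ends {a} - {e}) {e}"
proof -
  have "e \<in> cut_of E ends {a}" using assms(2,3) by (simp add: cut_of_singleton_endpoint)
  moreover have "is_cut V E ends (cut_of E ends {a})"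
    using is_cut_singleton_endpoint[OF assms(1) _ assms(3)] assms(2) by blast
  ultimately show ?thesis using assms(2) unfolding gen_attack_def by blast
qed

lemma insecure_edge_admits_hidden_attack:
  assumes "multigraph V E ends" and "e \<in> E - S"
  shows "admits_hidden_attack V E ends S"
proof -
  have "ends e \<noteq> {}" using assms unfolding multigraph_def by fastforce
  then obtain a where a: "a \<in> ends e" by blast
  have "{e} \<union> (cut_of E ends {a} - {e}) = cut_of E ends {a}"
    using cut_of_singleton_endpoint[of e E a ends] assms(2) a by blast
  then show ?thesis using gen_attack_single_edge[OF assms a]
    unfolding admits_hidden_attack_def hidden_attack_def by blast
qed

lemma insecure_edge_admits_detectable_attack:
  assumes "multigraph V E ends" and "e \<in> E - S"
  shows "admits_detectable_attack V E ends S"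
proof -
  have "ends e \<noteq> {}" using assms unfolding multigraph_def by fastforce
  then obtain a where a: "a \<in> ends e" by blast
  have "cut_of E ends {a} - (cut_of E ends {a} - {e}) = {e}"
    using cut_of_singleton_endpoint[of e E a ends] assms(2) a by blast
  with gen_attack_single_edge[OF assms a]
  have "detectable_attack V E ends S (cut_of E ends {a}) (cut_of E ends {a} - {e}) {e}"
    unfolding detectable_attack_def by simp
  then show ?thesis unfolding admits_detectable_attack_def by blast
qed

lemma cut_of_restrict_subgraph:
  assumes "E \<subseteq> E'" and "\<forall>e\<in>E. ends' e = ends e"
  shows "cut_of E' ends' U \<inter> E = cut_of E ends U"
  using assms unfolding cut_of_def by auto

lemma gen_attack_add_secure_edges:
  assumes "gen_attack V E ends S C J I"
    and "E \<subseteq> E'" and "\<forall>e\<in>E. ends' e = ends e"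
  obtains C' where "C' \<inter> E = C"
    and "gen_attack V E' ends' (S \<union> (E' - E)) C' (J \<union> (C' - C)) I"
proof -
  from assms(1) obtain U where U: "U \<noteq> {}" "U \<subset> V" "C = cut_of E ends U"
    and J: "J \<subseteq> C" and I: "I \<subseteq> (C \<inter> (E - S)) - J" "I \<noteq> {}"
    unfolding gen_attack_def is_cut_def by blast
  define C' where "C' = cut_of E' ends' U"
  have restrict: "C' \<inter> E = C"
    unfolding C'_def U(3) using cut_of_restrict_subgraph[OF assms(2,3)] .
  have "is_cut V E' ends' C'" unfolding is_cut_def C'_def using U(1,2) by blast
  then have "gen_attack V E' ends' (S \<union> (E' - E)) C' (J \<union> (C' - C)) I"
    unfolding gen_attack_def using J I restrict assms(2) by blast
  with restrict show thesis by (rule that)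
qed

lemma admits_hidden_attack_add_secure_edges:
  assumes "admits_hidden_attack V E ends S"
    and "E \<subseteq> E'" and "\<forall>e\<in>E. ends' e = ends e"
  shows "admits_hidden_attack V E' ends' (S \<union> (E' - E))"
proof -
  from assms(1) obtain C J I where att: "gen_attack V E ends S C J I" and "I \<union> J = C"
    unfolding admits_hidden_attack_def hidden_attack_def by blast
  from gen_attack_add_secure_edges[OF att assms(2,3)] obtain C' where
    "C' \<inter> E = C" and att': "gen_attack V E' ends' (S \<union> (E' - E)) C' (J \<union> (C' - C)) I" .
  then have "I \<union> (J \<union> (C' - C)) = C'" using \<open>I \<union> J = C\<close> by blast
  with att' show ?thesis unfolding admits_hidden_attack_def hidden_attack_def by blast
qed

lemma admits_detectable_attack_add_secure_edges:
  assumes "admits_detectable_attack V E ends S"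
    and "E \<subseteq> E'" and "\<forall>e\<in>E. ends' e = ends e"
  shows "admits_detectable_attack V E' ends' (S \<union> (E' - E))"
proof -
  from assms(1) obtain C J I where att: "gen_attack V E ends S C J I"
    and count: "2 * card I > card (C - J)"
    unfolding admits_detectable_attack_def detectable_attack_def by blast
  from gen_attack_add_secure_edges[OF att assms(2,3)] obtain C' where
    "C' \<inter> E = C" and att': "gen_attack V E' ends' (S \<union> (E' - E)) C' (J \<union> (C' - C)) I" .
  then have "C' - (J \<union> (C' - C)) = C - J" by blast
  with att' count show ?thesis
    unfolding admits_detectable_attack_def detectable_attack_def by metis
qed

theorem theorem8:
  fixes V :: "'v set" and E S :: "'e set" and ends :: "'e \<Rightarrow> 'v set"
  assumes "multigraph V E ends" and "S \<subseteq> E"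
  shows "(E - S \<noteq> {} \<longrightarrow>
            admits_hidden_attack V E ends S \<and> admits_detectable_attack V E ends S)
       \<and> (\<forall>E' ends'. multigraph V E' ends' \<and> E \<subseteq> E' \<and> (\<forall>e\<in>E. ends' e = ends e) \<longrightarrow>
            (admits_hidden_attack V E ends S \<longrightarrow> admits_hidden_attack V E' ends' (S \<union> (E' - E)))
          \<and> (admits_detectable_attack V E ends S \<longrightarrow> admits_detectable_attack V E' ends' (S \<union> (E' - E))))"
proof (intro conjI impI allI)
  assume "E - S \<noteq> {}"
  then obtain e where e: "e \<in> E - S" by blast
  show "admits_hidden_attack V E ends S"
    using insecure_edge_admits_hidden_attack[OF assms(1) e] .
  show "admits_detectable_attack V E ends S"
    using insecure_edge_admits_detectable_attack[OF assms(1) e] .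
next
  fix E' ends'
  assume "multigraph V E' ends' \<and> E \<subseteq> E' \<and> (\<forall>e\<in>E. ends' e = ends e)"
  then have sub: "E \<subseteq> E'" and ends': "\<forall>e\<in>E. ends' e = ends e" by simp_all
  show "admits_hidden_attack V E' ends' (S \<union> (E' - E))"
    if "admits_hidden_attack V E ends S"
    using admits_hidden_attack_add_secure_edges[OF that sub ends'] .
  show "admits_detectable_attack V E' ends' (S \<union> (E' - E))"
    if "admits_detectable_attack V E ends S"
    using admits_detectable_attack_add_secure_edges[OF that sub ends'] .
qed

end
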